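(* Let $(N_1,m_1)$ and $(N_2,m_2)$ be labeled marked Petri nets and $E$ a system of linear constraints such that $(N_1,m_1)\vartriangleright_E(N_2,m_2)$. Then for all markings $m_1'$ of $N_1$ and $m_2'$ of $N_2$ such that $m_1'\uplus m_2'\models E$ and $m_2'\in R(N_2,m_2)$, we have $m_1'\in R(N_1,m_1)$.
   Context: A Petri net $N=(P,T,\mathrm{Pre},\mathrm{Post})$ has a finite set of places $P$, a finite set of transitions $T$ disjoint from $P$, and flow functions $\mathrm{Pre},\mathrm{Post}:T\to(P\to\mathbb N)$. A marking is a map $m:P\to\mathbb N$. Transition $t$ is enabled at $m$ if $m(p)\ge\mathrm{Pre}(t,p)$ for all $p$; firing it yields $m'=m-\mathrm{Pre}(t)+\mathrm{Post}(t)$. A firing sequence $\varrho$ leads from $m$ to $m'$ ($m\overset{\varrho}{\Rightarrow}m'$) if its transitions can be fired successively from $m$ reaching $m'$; $R(N,m_0)$ is the set of markings reachable from $m_0$. A labeled net has a labeling $l:T\to\Sigma\cup\{\tau\}$ ($\tau\notin\Sigma$ silent), extended to sequences by $l(\epsilon)=\epsilon$, $\tau$ mapped to $\epsilon$, $l(\varrho t)=l(\varrho)l(t)$. Formulas are Boolean combinations of linear (in)equalities over integer variables; place names are used as variables. For a marking $m$ over $P$, $\underline m\triangleq\bigwedge_{p\in P}(p=m(p))$; $m\models\phi$ means $\phi\wedge\underline m$ is satisfiable over the integers. Markings $m_1$ over $P_1$, $m_2$ over $P_2$ are compatible if they agree on $P_1\cap P_2$; then $m_1\uplus m_2$ is the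 marking on $P_1\cup P_2$ agreeing with both; $m_1\uplus m_2\models E$ presupposes compatibility. $E$-abstraction (for $N_1,N_2$ with labelings $l_1,l_2$ over the same alphabet): $(N_1,m_1)\sqsupseteq_E(N_2,m_2)$ iff (A1) $m_1\uplus m_2\models E$; and (A2) for every firing sequence $m_1\overset{\varrho_1}{\Rightarrow}m_1'$ in $N_1$ there is at least one marking $m_2'$ over $P_2$ with $m_1'\uplus m_2'\models E$, and for every marking $m_2'$ over $P_2$ with $m_1'\uplus m_2'\models E$ there is a firing sequence $\varrho_2$ of $N_2$ with $m_2\overset{\varrho_2}{\Rightarrow}m_2'$ and $l_1(\varrho_1)=l_2(\varrho_2)$. $(N_1,m_1)\vartriangleright_E(N_2,m_2)$ means both directions hold. *)

theory Defs
  imports Main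
begin

text \<open>Places have type 'p, transitions type 't, labels type 'a.
  The labeling maps a transition to Some a (visible label a) or None (silent tau).\<close>

record ('p, 't, 'a) lnet =
  places :: "'p set"
  trans  :: "'t set"
  pre    :: "'t \<Rightarrow> 'p \<Rightarrow> nat"
  post   :: "'t \<Rightarrow> 'p \<Rightarrow> nat"
  lab    :: "'t \<Rightarrow> 'a option"

definition wf_net :: "('p, 't, 'a) lnet \<Rightarrow> bool" where
  "wf_net N \<longleftrightarrow> finite (places N) \<and> finite (trans N) \<and>
     (\<forall>t p. p \<notin> places N \<longrightarrow> pre N t p = 0 \<and> post N t p = 0)"

definition is_marking :: "'p set \<Rightarrow> ('p \<Rightarrow> nat) \<Rightarrow> bool" where
  "is_marking P m \<longleftrightarrow> (\<forall>p. p \<notin> P \<longrightarrow> m p = 0)"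

definition enabled :: "('p, 't, 'a) lnet \<Rightarrow> ('p \<Rightarrow> nat) \<Rightarrow> 't \<Rightarrow> bool" where
  "enabled N m t \<longleftrightarrow> t \<in> trans N \<and> (\<forall>p. pre N t p \<le> m p)"

definition fire :: "('p, 't, 'a) lnet \<Rightarrow> ('p \<Rightarrow> nat) \<Rightarrow> 't \<Rightarrow> ('p \<Rightarrow> nat)" where
  "fire N m t = (\<lambda>p. m p - pre N t p + post N t p)"

fun fires :: "('p, 't, 'a) lnet \<Rightarrow> ('p \<Rightarrow> nat) \<Rightarrow> 't list \<Rightarrow> ('p \<Rightarrow> nat) \<Rightarrow> bool" where
  "fires N m [] m' \<longleftrightarrow> m' = m"
| "fires N m (t # ts) m' \<longleftrightarrow> enabled N m t \<and> fires N (fire N m t) ts m'"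

definition reach :: "('p, 't, 'a) lnet \<Rightarrow> ('p \<Rightarrow> nat) \<Rightarrow> ('p \<Rightarrow> nat) set" where
  "reach N m0 = {m'. \<exists>rho. fires N m0 rho m'}"

fun word :: "('p, 't, 'a) lnet \<Rightarrow> 't list \<Rightarrow> 'a list" where
  "word N [] = []"
| "word N (t # ts) = (case lab N t of None \<Rightarrow> word N ts | Some a \<Rightarrow> a # word N ts)"

datatype 'v formula =
    Le "('v \<times> int) list" int
  | Eq "('v \<times> int) list" int
  | FNot "'v formula"
  | FAnd "'v formula" "'v formula"
  | FOr "'v formula" "'v formula"

definition lin_val :: "('v \<Rightarrow> int) \<Rightarrow> ('v \<times> int) list \<Rightarrow> int" where
  "lin_val \<sigma> cs = (\<Sum>(x, c) \<leftarrow> cs. c * \<sigma> x)"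

fun holds :: "('v \<Rightarrow> int) \<Rightarrow> 'v formula \<Rightarrow> bool" where
  "holds \<sigma> (Le cs b) \<longleftrightarrow> lin_val \<sigma> cs \<le> b"
| "holds \<sigma> (Eq cs b) \<longleftrightarrow> lin_val \<sigma> cs = b"
| "holds \<sigma> (FNot f) \<longleftrightarrow> \<not> holds \<sigma> f"
| "holds \<sigma> (FAnd f g) \<longleftrightarrow> holds \<sigma> f \<and> holds \<sigma> g"
| "holds \<sigma> (FOr f g) \<longleftrightarrow> holds \<sigma> f \<or> holds \<sigma> g"

text \<open>m over P models phi: phi together with p = m(p) for all p in P is satisfiable over the integers.
  Place names are the variables; variables not in P are existentially quantified.\<close>
definition models :: "'p set \<Rightarrow> ('p \<Rightarrow> nat) \<Rightarrow> 'p formula \<Rightarrow> bool" where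
  "models P m \<phi> \<longleftrightarrow> (\<exists>\<sigma>. (\<forall>p\<in>P. \<sigma> p = int (m p)) \<and> holds \<sigma> \<phi>)"

definition compatible :: "'p set \<Rightarrow> ('p \<Rightarrow> nat) \<Rightarrow> 'p set \<Rightarrow> ('p \<Rightarrow> nat) \<Rightarrow> bool" where
  "compatible P1 m1 P2 m2 \<longleftrightarrow> (\<forall>p \<in> P1 \<inter> P2. m1 p = m2 p)"

definition munion :: "'p set \<Rightarrow> ('p \<Rightarrow> nat) \<Rightarrow> ('p \<Rightarrow> nat) \<Rightarrow> ('p \<Rightarrow> nat)" where
  "munion P1 m1 m2 = (\<lambda>p. if p \<in> P1 then m1 p else m2 p)"

definition union_models ::
  "('p, 't1, 'a) lnet \<Rightarrow> ('p \<Rightarrow> nat) \<Rightarrow> ('p, 't2, 'a) lnet \<Rightarrow> ('p \<Rightarrow> nat) \<Rightarrow> 'p formula \<Rightarrow> bool" where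
  "union_models N1 m1 N2 m2 E \<longleftrightarrow>
     compatible (places N1) m1 (places N2) m2 \<and>
     models (places N1 \<union> places N2) (munion (places N1) m1 m2) E"

definition abstraction ::
  "('p, 't1, 'a) lnet \<Rightarrow> ('p \<Rightarrow> nat) \<Rightarrow> 'p formula \<Rightarrow> ('p, 't2, 'a) lnet \<Rightarrow> ('p \<Rightarrow> nat) \<Rightarrow> bool" where
  "abstraction N1 m1 E N2 m2 \<longleftrightarrow>
     union_models N1 m1 N2 m2 E \<and>
     (\<forall>rho1 m1'. fires N1 m1 rho1 m1' \<longrightarrow>
        (\<exists>m2'. is_marking (places N2) m2' \<and> union_models N1 m1' N2 m2' E) \<and>
        (\<forall>m2'. is_marking (places N2) m2' \<and> union_models N1 m1' N2 m2' E \<longrightarrow>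
           (\<exists>rho2. fires N2 m2 rho2 m2' \<and> word N1 rho1 = word N2 rho2)))"

definition bi_abstraction ::
  "('p, 't1, 'a) lnet \<Rightarrow> ('p \<Rightarrow> nat) \<Rightarrow> 'p formula \<Rightarrow> ('p, 't2, 'a) lnet \<Rightarrow> ('p \<Rightarrow> nat) \<Rightarrow> bool" where
  "bi_abstraction N1 m1 E N2 m2 \<longleftrightarrow> abstraction N1 m1 E N2 m2 \<and> abstraction N2 m2 E N1 m1"

end

theory Submission
  imports Defs
begin

lemma compatible_commute:
  "compatible P2 m2 P1 m1 \<longleftrightarrow> compatible P1 m1 P2 m2"
  unfolding compatible_def by auto

lemma munion_commute_on_union:
  assumes "compatible P1 m1 P2 m2" and "p \<in> P1 \<union> P2"
  shows "munion P2 m2 m1 p = munion P1 m1 m2 p"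
  using assms unfolding compatible_def munion_def by auto

lemma union_models_commute:
  "union_models N2 m2 N1 m1 E \<longleftrightarrow> union_models N1 m1 N2 m2 E"
proof -
  have "models (places N2 \<union> places N1) (munion (places N2) m2 m1) E
          \<longleftrightarrow> models (places N1 \<union> places N2) (munion (places N1) m1 m2) E"
    if "compatible (places N1) m1 (places N2) m2"
    using munion_commute_on_union[OF that] unfolding models_def by (simp add: Un_commute)
  then show ?thesis
    unfolding union_models_def by (metis compatible_commute)
qed

lemma abstraction_reach:
  assumes "abstraction N1 m1 E N2 m2"
    and "m1' \<in> reach N1 m1"
    and "is_marking (places N2) m2'"
    and "union_models N1 m1' N2 m2' E"
  shows "m2' \<in> reach N2 m2"
proof -
  obtain rho1 where "fires N1 m1 rho1 m1'"
    using assms(2) unfolding reach_def by auto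
  then have "\<forall>m2'. is_marking (places N2) m2' \<and> union_models N1 m1' N2 m2' E \<longrightarrow>
      (\<exists>rho2. fires N2 m2 rho2 m2' \<and> word N1 rho1 = word N2 rho2)"
    using assms(1) unfolding abstraction_def by blast
  then obtain rho2 where "fires N2 m2 rho2 m2'"
    using assms(3,4) by blast
  then show ?thesis
    unfolding reach_def by blast
qed

theorem lemma2:
  fixes N1 :: "('p, 't1, 'a) lnet" and N2 :: "('p, 't2, 'a) lnet" and E :: "'p formula"
  assumes "wf_net N1" and "wf_net N2"
    and "is_marking (places N1) m1" and "is_marking (places N2) m2"
    and "bi_abstraction N1 m1 E N2 m2"
    and "is_marking (places N1) m1'" and "is_marking (places N2) m2'"
    and "union_models N1 m1' N2 m2' E"
    and "m2' \<in> reach N2 m2"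
  shows "m1' \<in> reach N1 m1"
proof -
  have "abstraction N2 m2 E N1 m1"
    using assms(5) unfolding bi_abstraction_def by simp
  moreover have "union_models N2 m2' N1 m1' E"
    using assms(8) by (rule union_models_commute[THEN iffD2])
  ultimately show ?thesis
    by (rule abstraction_reach[OF _ assms(9) assms(6)])
qed

end
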